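(* Let $g_n$ denote the parity of the number of digits equal to $1$ in the negabinary representation of $n$. Then for every integer $m\ge0$: $g_{2^m-1}=0$ if $m=0$; $g_{2^m-1}=1$ if $m=1$; $g_{2^m-1}=1$ if $m\ge2$ is even; and $g_{2^m-1}=0$ if $m\ge3$ is odd.
   Context: Every nonnegative integer $n$ has a unique representation $n=\sum_{i\ge0} d_i(-2)^i$ with digits $d_i\in\{0,1\}$, only finitely many nonzero; this is the negabinary representation. Parity means the number modulo $2$. *)

theory Defs
  imports Main
begin

definition is_negabinary :: "nat \<Rightarrow> (nat \<Rightarrow> nat) \<Rightarrow> bool" where
  "is_negabinary n d \<longleftrightarrow> (\<forall>i. d i \<in> {0, 1}) \<and> finite {i. d i \<noteq> 0} \<and>
     int n = (\<Sum>i\<in>{i. d i \<noteq> 0}. int (d i) * (-2) ^ i)"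

definition negabinary_digits :: "nat \<Rightarrow> nat \<Rightarrow> nat" where
  "negabinary_digits n = (THE d. is_negabinary n d)"

definition g :: "nat \<Rightarrow> nat" where
  "g n = card {i. negabinary_digits n i = 1} mod 2"

end

theory Submission
  imports Defs
begin

text \<open>Negabinary representations are unique, so it suffices to exhibit one for \<open>2^m - 1\<close>:
  for even \<open>m \<ge> 2\<close> it is \<open>(-2)^m + (-2) + 1\<close>, with three ones, and for odd \<open>m \<ge> 3\<close> it is
  \<open>(-2)^(m+1) + (-2)^m + (-2) + 1\<close>, with four ones.\<close>

lemma negabinary_sum_lessThan_Suc:
  fixes f :: "nat \<Rightarrow> int"
  shows "(\<Sum>i<Suc N. f i * (-2)^i) = f 0 + (-2) * (\<Sum>i<N. f (Suc i) * (-2)^i)"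
  unfolding sum.lessThan_Suc_shift
  by (simp add: sum_distrib_left mult_ac del: sum.lessThan_Suc)

lemma binary_digit_and_quotient_unique:
  fixes a b :: nat and A B :: int
  assumes "a \<in> {0, 1}" "b \<in> {0, 1}" "int a + (-2) * A = int b + (-2) * B"
  shows "a = b \<and> A = B"
  using assms by auto presburger+

lemma negabinary_sum_inj:
  fixes d e :: "nat \<Rightarrow> nat"
  assumes "\<forall>i. d i \<in> {0, 1}" "\<forall>i. e i \<in> {0, 1}"
    and "(\<Sum>i<N. int (d i) * (-2)^i) = (\<Sum>i<N. int (e i) * (-2)^i)"
  shows "\<forall>i<N. d i = e i"
  using assms
proof (induction N arbitrary: d e)
  case 0
  then show ?case by simp
next
  case (Suc N)
  have "d 0 = e 0 \<and>
      (\<Sum>i<N. int (d (Suc i)) * (-2)^i) = (\<Sum>i<N. int (e (Suc i)) * (-2)^i)"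
    using Suc.prems binary_digit_and_quotient_unique
    unfolding negabinary_sum_lessThan_Suc by blast
  moreover have "\<forall>i. d (Suc i) \<in> {0, 1}" "\<forall>i. e (Suc i) \<in> {0, 1}"
    using Suc.prems(1,2) by blast+
  ultimately have "d 0 = e 0" "\<forall>i<N. d (Suc i) = e (Suc i)"
    using Suc.IH[of "\<lambda>i. d (Suc i)" "\<lambda>i. e (Suc i)"] by blast+
  then show ?case
    by (auto simp: less_Suc_eq_0_disj)
qed

lemma is_negabinary_unique:
  assumes "is_negabinary n d" "is_negabinary n e"
  shows "d = e"
proof -
  have digits: "\<forall>i. d i \<in> {0, 1}" "\<forall>i. e i \<in> {0, 1}"
    and support: "finite {i. d i \<noteq> 0}" "finite {i. e i \<noteq> 0}"
    and n: "int n = (\<Sum>i\<in>{i. d i \<noteq> 0}. int (d i) * (-2)^i)"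
           "int n = (\<Sum>i\<in>{i. e i \<noteq> 0}. int (e i) * (-2)^i)"
    using assms unfolding is_negabinary_def by blast+
  obtain N where N: "\<forall>i\<in>{i. d i \<noteq> 0} \<union> {i. e i \<noteq> 0}. i < N"
    using support finite_nat_set_iff_bounded[of "{i. d i \<noteq> 0} \<union> {i. e i \<noteq> 0}"] by auto
  have "(\<Sum>i\<in>{i. d i \<noteq> 0}. int (d i) * (-2)^i) = (\<Sum>i<N. int (d i) * (-2)^i)"
       "(\<Sum>i\<in>{i. e i \<noteq> 0}. int (e i) * (-2)^i) = (\<Sum>i<N. int (e i) * (-2)^i)"
    using N by (auto intro: sum.mono_neutral_left)
  with n have below: "\<forall>i<N. d i = e i"
    using negabinary_sum_inj[OF digits] by simp
  have above: "d i = 0 \<and> e i = 0" if "i \<ge> N" for i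
    using N that by (auto dest!: bspec[of _ _ i])
  show ?thesis
  proof
    fix i
    show "d i = e i"
      using below above[of i] by (cases "i < N") auto
  qed
qed

lemma negabinary_digits_eqI:
  assumes "is_negabinary n d"
  shows "negabinary_digits n = d"
  unfolding negabinary_digits_def
  by (rule the_equality) (use assms is_negabinary_unique in blast)+

lemma g_eq_card_mod_2:
  assumes "finite S" "int n = (\<Sum>i\<in>S. (-2)^i)"
  shows "g n = card S mod 2"
proof -
  define d where "d = (\<lambda>i. if i \<in> S then 1 else 0 :: nat)"
  have support: "{i. d i \<noteq> 0} = S" "{i. d i = 1} = S"
    by (auto simp: d_def)
  have "is_negabinary n d"
    unfolding is_negabinary_def support using assms by (auto simp: d_def)
  then show ?thesis
    unfolding g_def negabinary_digits_eqI[OF \<open>is_negabinary n d\<close>] support by simp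
qed

theorem corollary1:
  fixes m :: nat
  shows "g (2 ^ m - 1) = (if m = 0 then 0 else if m = 1 then 1 else if even m then 1 else 0)"
proof -
  have n: "int (2 ^ m - 1) = 2 ^ m - 1"
    by (simp add: of_nat_diff)
  consider "m = 0" | "m = 1" | "m \<ge> 2" "even m" | "m \<ge> 2" "odd m"
    by (metis One_nat_def less_2_cases not_less)
  then show ?thesis
  proof cases
    case 1
    then show ?thesis using g_eq_card_mod_2[of "{}"] by simp
  next
    case 2
    then show ?thesis using g_eq_card_mod_2[of "{0}"] by simp
  next
    case 3
    then have "int (2 ^ m - 1) = (\<Sum>i\<in>{0, 1, m}. (-2)^i)"
      by (simp add: n power_minus_even)
    with 3 show ?thesis using g_eq_card_mod_2[of "{0, 1, m}"] by simp
  next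
    case 4
    then have "int (2 ^ m - 1) = (\<Sum>i\<in>{0, 1, m, m + 1}. (-2)^i)"
      by (simp add: n power_minus_odd)
    with 4 show ?thesis using g_eq_card_mod_2[of "{0, 1, m, m + 1}"] by simp
  qed
qed

end
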